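(* Let $0<p<1$, $q=1-p$, let $\{X_i,i\geq 1\}$ be independent with $P\{X_i=1\}=p$, $P\{X_i=0\}=q$, and write $\lambda=1/\sqrt{pq}$. Let $\varepsilon>0$. Then for almost all $\omega$ there exists an infinite sequence of integers $N_i=N_i(\omega,\varepsilon)$, $i=1,2,\ldots$, such that $$M_{N_i}<\left\lfloor \log_{\lambda} N_i-\log_{\lambda}\log_{\lambda}\log_{\lambda} N_i+\log_{\lambda}\log_{\lambda} e+1+\varepsilon\right\rfloor .$$
   Context: For $m,n\in\mathbb N$ let $S_n^{(m)}:=\sum_{i=m+1}^{n+m-1}\big[(1-X_{i-1})X_i+X_{i-1}(1-X_i)\big]$ be the number of switches among $X_m,\ldots,X_{m+n-1}$. For $m,N\in\mathbb N$ and $n=1,\ldots,N$ let $H_{m,n}^{(N)}:=\bigcup_{i=m}^{m+N-n+1}\{S_n^{(i)}=n-1\}$, and $M_N^{(m)}:=\max_{1\leq n\leq N}\{n-1 : H_{m,n}^{(N)}\neq\emptyset\}$ (length of the longest consecutive switches in $X_m,\ldots,X_{m+N-1}$). Write $M_N:=M_N^{(1)}$. *)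

theory Defs
  imports "HOL-Probability.Probability"
begin

definition switches :: "(nat \<Rightarrow> 'a \<Rightarrow> real) \<Rightarrow> nat \<Rightarrow> nat \<Rightarrow> 'a \<Rightarrow> real" where
  "switches X n m \<omega> =
     (\<Sum>i = m+1..n+m-1. (1 - X (i-1) \<omega>) * X i \<omega> + X (i-1) \<omega> * (1 - X i \<omega>))"

definition in_H :: "(nat \<Rightarrow> 'a \<Rightarrow> real) \<Rightarrow> nat \<Rightarrow> nat \<Rightarrow> nat \<Rightarrow> 'a \<Rightarrow> bool" where
  "in_H X N m n \<omega> \<longleftrightarrow> (\<exists>i \<in> {m..m+N-n+1}. switches X n i \<omega> = real n - 1)"

definition longest_switch :: "(nat \<Rightarrow> 'a \<Rightarrow> real) \<Rightarrow> nat \<Rightarrow> nat \<Rightarrow> 'a \<Rightarrow> nat" where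
  "longest_switch X m N \<omega> = Max {n - 1 | n. 1 \<le> n \<and> n \<le> N \<and> in_H X N m n \<omega>}"

definition M_N :: "(nat \<Rightarrow> 'a \<Rightarrow> real) \<Rightarrow> nat \<Rightarrow> 'a \<Rightarrow> nat" where
  "M_N X N \<omega> = longest_switch X 1 N \<omega>"

end

theory Submission
  imports Defs
begin

text \<open>Write \<open>lam = 1 / sqrt (p q)\<close>. A given stretch of \<open>L + 1\<close> variables alternates with
  probability at most \<open>lam powr (- L)\<close>. For the horizon \<open>N \<approx> lam powr (L - 1 - eps/2) * ln L\<close>
  the threshold of the theorem just exceeds \<open>L\<close>. Since a run only involves \<open>L + 1\<close> consecutive
  variables, a sliding-window Lovasz local lemma shows that with probability at least
  \<open>(1 - x) ^ N \<approx> 1 / sqrt L\<close>, where \<open>x \<approx> lam powr (- L)\<close>, no alternating run of length \<open>L\<close>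
  starts in a given window of \<open>N\<close> positions. With \<open>L = (k + k\<^sub>0)\<^sup>2\<close> in the \<open>k\<close>-th window these
  windows can be taken disjoint, so their events are independent with divergent probability sum,
  and by the second Borel--Cantelli lemma infinitely many of them occur. A run starting before the
  \<open>k\<close>-th window has summable probability, so by the first Borel--Cantelli lemma eventually none
  does. For those \<open>k\<close> the longest run up to the end of the window is shorter than \<open>L\<close>.\<close>

section \<open>Alternating runs\<close>

definition alternates :: "(nat \<Rightarrow> bool) \<Rightarrow> nat \<Rightarrow> nat \<Rightarrow> bool" where
  "alternates f m L \<longleftrightarrow> (\<forall>j\<in>{m<..m+L}. f (j - 1) \<noteq> f j)"

lemma alternates_cong:
  assumes "\<And>i. i \<in> {m..m+L} \<Longrightarrow> f i = g i"
  shows "alternates f m L = alternates g m L"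
proof -
  have "f (j - 1) = g (j - 1) \<and> f j = g j" if "j \<in> {m<..m+L}" for j
    using that by (intro conjI assms) auto
  then show ?thesis by (auto simp: alternates_def)
qed

lemma alternates_iff_pattern:
  "alternates f m L \<longleftrightarrow> (\<exists>b. \<forall>i\<in>{m..m+L}. f i = (b \<noteq> odd (i - m)))"
proof
  assume alt: "alternates f m L"
  have pattern: "d \<le> L \<longrightarrow> f (m + d) = (f m \<noteq> odd d)" for d
  proof (induction d)
    case (Suc d)
    show ?case
    proof
      assume "Suc d \<le> L"
      then have "Suc (m + d) \<in> {m<..m+L}" by simp
      with alt have "f (m + d) \<noteq> f (Suc (m + d))" unfolding alternates_def by fastforce
      moreover have "f (m + d) = (f m \<noteq> odd d)" using Suc.IH \<open>Suc d \<le> L\<close> by simp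
      ultimately show "f (m + Suc d) = (f m \<noteq> odd (Suc d))" by auto
    qed
  qed simp
  have "f i = (f m \<noteq> odd (i - m))" if i: "i \<in> {m..m+L}" for i
  proof -
    have "i - m \<le> L" and "m + (i - m) = i" using i by auto
    then show ?thesis using pattern[of "i - m"] by simp
  qed
  then show "\<exists>b. \<forall>i\<in>{m..m+L}. f i = (b \<noteq> odd (i - m))" by blast
next
  assume "\<exists>b. \<forall>i\<in>{m..m+L}. f i = (b \<noteq> odd (i - m))"
  then obtain b where b: "\<And>i. i \<in> {m..m+L} \<Longrightarrow> f i = (b \<noteq> odd (i - m))" by blast
  show "alternates f m L"
    unfolding alternates_def
  proof
    fix j assume j: "j \<in> {m<..m+L}"
    define d where "d = j - m - 1"
    have "j = m + Suc d" "Suc d \<le> L" using j by (auto simp: d_def)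
    then show "f (j - 1) \<noteq> f j" using b[of j] b[of "j - 1"] by simp
  qed
qed

lemma switch_term_binary:
  fixes a b :: real
  assumes "a = 0 \<or> a = 1" and "b = 0 \<or> b = 1"
  shows "(1 - a) * b + a * (1 - b) = (if (a = 1) \<noteq> (b = 1) then 1 else 0)"
  using assms by auto

lemma alternates_if_switches:
  assumes bin: "\<And>i. 1 \<le> i \<Longrightarrow> X i \<omega> = 0 \<or> X i \<omega> = 1"
    and "1 \<le> m" and "1 \<le> n" and sw: "switches X n m \<omega> = real n - 1"
  shows "alternates (\<lambda>i. X i \<omega> = 1) m (n - 1)"
proof -
  define A where "A = {m+1..n+m-1}"
  define t where "t j = (1 - X (j - 1) \<omega>) * X j \<omega> + X (j - 1) \<omega> * (1 - X j \<omega>)" for j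
  have t: "t j = (if (X (j - 1) \<omega> = 1) \<noteq> (X j \<omega> = 1) then 1 else 0)" if "j \<in> A" for j
    unfolding t_def using that \<open>1 \<le> m\<close> by (intro switch_term_binary bin) (auto simp: A_def)
  have "finite A" by (simp add: A_def)
  have "(\<Sum>j\<in>A. 1 - t j) = real (card A) - sum t A" by (simp add: sum_subtractf)
  also have "\<dots> = 0"
    using sw \<open>1 \<le> n\<close> by (simp add: A_def t_def switches_def of_nat_diff)
  finally have sum0: "(\<Sum>j\<in>A. 1 - t j) = 0" .
  have nonneg: "0 \<le> 1 - t j" if "j \<in> A" for j using t[OF that] by simp
  have "(X (j - 1) \<omega> = 1) \<noteq> (X j \<omega> = 1)" if "j \<in> A" for j
  proof -
    have "t j = 1" using sum_nonneg_eq_0_iff[OF \<open>finite A\<close> nonneg] sum0 that by simp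
    then show ?thesis using t[OF that] by (simp split: if_split_asm)
  qed
  moreover have "{m<..m + (n - 1)} \<subseteq> A" using \<open>1 \<le> n\<close> by (auto simp: A_def)
  ultimately show ?thesis unfolding alternates_def by (meson subsetD)
qed

text \<open>In \<^const>\<open>in_H\<close> a window of \<open>n\<close> variables may start at \<open>N - n + 2\<close>, so it reaches
  \<open>X (N + 1)\<close>; hence the bound \<open>m + L \<le> N + 1\<close>.\<close>
lemma M_N_less_if_no_alternation:
  assumes "1 \<le> N" and bin: "\<And>i. 1 \<le> i \<Longrightarrow> X i \<omega> = 0 \<or> X i \<omega> = 1"
    and no_alt: "\<And>m. 1 \<le> m \<Longrightarrow> m + L \<le> N + 1 \<Longrightarrow> \<not> alternates (\<lambda>i. X i \<omega> = 1) m L"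
  shows "M_N X N \<omega> < L"
proof -
  define S where "S = {n - 1 | n. 1 \<le> n \<and> n \<le> N \<and> in_H X N 1 n \<omega>}"
  have "finite S"
    by (rule finite_subset[of _ "(\<lambda>n. n - 1) ` {1..N}"]) (auto simp: S_def)
  have "in_H X N 1 1 \<omega>"
    using \<open>1 \<le> N\<close> by (auto simp: in_H_def switches_def)
  then have "0 \<in> S" using \<open>1 \<le> N\<close> by (force simp: S_def)
  have "s < L" if "s \<in> S" for s
  proof (rule ccontr)
    assume "\<not> s < L"
    obtain n i where n: "s = n - 1" "1 \<le> n" "n \<le> N" and i: "i \<in> {1..1+N-n+1}"
      and sw: "switches X n i \<omega> = real n - 1"
      using \<open>s \<in> S\<close> by (auto simp: S_def in_H_def)
    have "alternates (\<lambda>i. X i \<omega> = 1) i (n - 1)"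
      using i n sw by (intro alternates_if_switches bin) auto
    then have "alternates (\<lambda>i. X i \<omega> = 1) i L"
      using \<open>\<not> s < L\<close> n by (auto simp: alternates_def)
    moreover have "1 \<le> i" "i + L \<le> N + 1" using i n \<open>\<not> s < L\<close> by auto
    ultimately show False using no_alt by blast
  qed
  moreover have "M_N X N \<omega> = Max S"
    unfolding S_def M_N_def longest_switch_def by simp
  moreover have "S \<noteq> {}" using \<open>0 \<in> S\<close> by blast
  ultimately show ?thesis
    using \<open>finite S\<close> by (simp add: Max_less_iff)
qed

section \<open>Probability tools\<close>

lemma ratio_chain_lower_bound:
  fixes c :: "nat \<Rightarrow> real"
  assumes "0 \<le> a" and "s \<le> t" and step: "\<And>n. s \<le> n \<Longrightarrow> n < t \<Longrightarrow> a * c n \<le> c (Suc n)"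
  shows "a ^ (t - s) * c s \<le> c t"
  using \<open>s \<le> t\<close> step
proof (induction t rule: dec_induct)
  case (step n)
  have "a ^ (Suc n - s) * c s = a * (a ^ (n - s) * c s)"
    using \<open>s \<le> n\<close> by (simp add: Suc_diff_le)
  also have "\<dots> \<le> a * c n"
    using step.IH step.prems \<open>0 \<le> a\<close> by (intro mult_left_mono) auto
  also have "\<dots> \<le> c (Suc n)"
    using step.prems step.hyps by simp
  finally show ?case .
qed simp

lemma (in prob_space) indep_events_compl:
  assumes "indep_events A I"
  shows "indep_events (\<lambda>i. space M - A i) I"
proof -
  have "indep_sets (\<lambda>i. sigma_sets (space M) {A i}) I"
    using assms by (intro indep_sets_sigma) (simp_all add: indep_events_def_alt Int_stable_def)
  then show ?thesis
    unfolding indep_events_def_alt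
    by (rule indep_sets_mono_sets) (auto intro: sigma_sets.Compl sigma_sets.Basic)
qed

lemma (in prob_space) prob_INT_compl_le_exp:
  assumes "indep_events A I" "J \<subseteq> I" "finite J" "J \<noteq> {}"
  shows "prob (\<Inter>k\<in>J. space M - A k) \<le> exp (- (\<Sum>k\<in>J. prob (A k)))"
proof -
  have A: "A k \<in> events" if "k \<in> J" for k
    using assms(1,2) that by (auto simp: indep_events_def)
  have "prob (\<Inter>k\<in>J. space M - A k) = (\<Prod>k\<in>J. prob (space M - A k))"
    using indep_events_compl[OF assms(1)] assms(2-4) by (auto simp: indep_events_def)
  also have "\<dots> = (\<Prod>k\<in>J. 1 - prob (A k))"
    by (intro prod.cong) (auto simp: prob_compl A)
  also have "\<dots> \<le> (\<Prod>k\<in>J. exp (- prob (A k)))"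
    by (intro prod_mono) (auto simp: exp_ge_add_one_self[of "- prob _", simplified])
  also have "\<dots> = exp (- (\<Sum>k\<in>J. prob (A k)))"
    using assms(3) by (simp add: exp_sum[symmetric] sum_negf)
  finally show ?thesis .
qed

lemma (in prob_space) prob_tail_UN_eq_1:
  fixes A :: "nat \<Rightarrow> 'a set"
  assumes indep: "indep_events A UNIV" and diverges: "\<not> summable (\<lambda>k. prob (A k))"
  shows "prob (\<Union>k\<in>{n..}. A k) = 1"
proof -
  have A: "A k \<in> events" for k
    using indep by (auto simp: indep_events_def)
  let ?P = "prob (space M - (\<Union>k\<in>{n..}. A k))"
  have bound: "?P \<le> exp (- (\<Sum>k<m. prob (A (k + n))))" for m
  proof -
    have "?P \<le> prob (\<Inter>k\<in>{n..n+m}. space M - A k)"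
      using A by (intro finite_measure_mono) auto
    also have "\<dots> \<le> exp (- (\<Sum>k\<in>{n..n+m}. prob (A k)))"
      by (rule prob_INT_compl_le_exp[OF indep]) auto
    also have "\<dots> = exp (- (\<Sum>k\<le>m. prob (A (k + n))))"
      by (simp add: sum.shift_bounds_cl_nat_ivl[of _ 0 n m, simplified] atLeast0AtMost add.commute)
    also have "\<dots> \<le> exp (- (\<Sum>k<m. prob (A (k + n))))"
      by (simp add: lessThan_Suc_atMost[symmetric])
    finally show ?thesis .
  qed
  have "\<not> summable (\<lambda>k. prob (A (k + n)))"
    using diverges summable_iff_shift[of "\<lambda>k. prob (A k)" n] by simp
  then have unbounded: "\<exists>m. b < (\<Sum>k<m. prob (A (k + n)))" for b
    using summableI_nonneg_bounded[of "\<lambda>k. prob (A (k + n))" b] by (meson measure_nonneg not_le)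
  have "?P = 0"
  proof (rule ccontr)
    assume "?P \<noteq> 0"
    then have "0 < ?P" by (simp add: zero_less_measure_iff)
    obtain m where "- ln ?P < (\<Sum>k<m. prob (A (k + n)))"
      using unbounded by blast
    then have "exp (- (\<Sum>k<m. prob (A (k + n)))) < ?P"
      using \<open>0 < ?P\<close> by (metis exp_less_cancel_iff exp_ln minus_less_iff)
    with bound[of m] show False by simp
  qed
  moreover have "(\<Union>k\<in>{n..}. A k) \<in> events"
    using A by auto
  ultimately show ?thesis
    using prob_compl by simp
qed

lemma (in prob_space) borel_cantelli_AE2:
  fixes A :: "nat \<Rightarrow> 'a set"
  assumes "indep_events A UNIV" and "\<not> summable (\<lambda>k. prob (A k))"
  shows "AE \<omega> in M. infinite {k. \<omega> \<in> A k}"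
proof -
  have "AE \<omega> in M. \<forall>n. \<omega> \<in> (\<Union>k\<in>{n..}. A k)"
    unfolding AE_all_countable using prob_tail_UN_eq_1[OF assms] assms(1)
    by (subst prob_eq_1[symmetric]) (auto simp: indep_events_def)
  then show ?thesis
    by (rule AE_mp) (auto simp: infinite_nat_iff_unbounded_le intro!: AE_I2)
qed

text \<open>A sliding-window form of the Lovasz local lemma: each bad event \<open>B t\<close> is independent of
  having avoided all bad events that end before its window starts.\<close>
lemma (in prob_space) prob_avoid_sliding_window:
  fixes B :: "nat \<Rightarrow> 'a set" and L :: nat and r x :: real
  defines "C t \<equiv> space M - (\<Union>m<t. B m)"
  assumes B: "\<And>m. B m \<in> events" and prob_B: "\<And>m. prob (B m) \<le> r"
    and indep: "\<And>t. L \<le> t \<Longrightarrow> prob (C (t - L) \<inter> B t) = prob (C (t - L)) * prob (B t)"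
    and "0 \<le> x" "x < 1" and r: "r \<le> x * (1 - x) ^ L"
  shows "(1 - x) ^ t \<le> prob (C t)"
proof -
  have C: "C t \<in> events" for t
    using B by (auto simp: C_def)
  have C_Suc: "C (Suc t) = C t - B t" for t
    by (auto simp: C_def lessThan_Suc)
  have step: "(1 - x) * prob (C t) \<le> prob (C (Suc t))" for t
  proof (induction t rule: less_induct)
    case (less t)
    define s where "s = t - L"
    have "(1 - x) ^ L * prob (C s) \<le> (1 - x) ^ (t - s) * prob (C s)"
      using \<open>0 \<le> x\<close> \<open>x < 1\<close> by (intro mult_right_mono power_decreasing) (auto simp: s_def)
    also have "\<dots> \<le> prob (C t)"
      using less.IH \<open>x < 1\<close> by (intro ratio_chain_lower_bound) (auto simp: s_def)
    finally have lookback: "(1 - x) ^ L * prob (C s) \<le> prob (C t)" .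
    have factor: "prob (C s \<inter> B t) = prob (C s) * prob (B t)"
    proof (cases "L \<le> t")
      case False
      then have "C s = space M" by (simp add: s_def C_def)
      then show ?thesis using sets.sets_into_space[OF B] by (simp add: Int_absorb1 prob_space)
    qed (simp add: indep s_def)
    have "prob (C t) - prob (C (Suc t)) = prob (C t \<inter> B t)"
      using finite_measure_Diff'[OF C B] C_Suc by simp
    also have "\<dots> \<le> prob (C s \<inter> B t)"
      using C B by (intro finite_measure_mono) (auto simp: s_def C_def)
    also have "\<dots> \<le> prob (C s) * r"
      using factor prob_B by (simp add: mult_left_mono)
    also have "\<dots> \<le> x * ((1 - x) ^ L * prob (C s))"
      using mult_right_mono[OF r measure_nonneg[of M "C s"]] by (simp add: mult_ac)
    also have "\<dots> \<le> x * prob (C t)"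
      using lookback \<open>0 \<le> x\<close> by (rule mult_left_mono)
    finally show ?case by (simp add: algebra_simps)
  qed
  have "(1 - x) ^ (t - 0) * prob (C 0) \<le> prob (C t)"
    using step \<open>x < 1\<close> by (intro ratio_chain_lower_bound) auto
  then show ?thesis by (simp add: C_def prob_space)
qed

lemma (in prob_space) AE_two_valued:
  fixes X :: "'a \<Rightarrow> real"
  assumes "X \<in> borel_measurable M" "a \<noteq> b"
    and "prob {\<omega> \<in> space M. X \<omega> = a} + prob {\<omega> \<in> space M. X \<omega> = b} = 1"
  shows "AE \<omega> in M. X \<omega> = a \<or> X \<omega> = b"
proof -
  have [measurable]: "{\<omega> \<in> space M. X \<omega> = c} \<in> events" for c
    using assms(1) by measurable
  have "prob ({\<omega> \<in> space M. X \<omega> = a} \<union> {\<omega> \<in> space M. X \<omega> = b}) = 1"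
    using assms(2,3) by (subst finite_measure_Union) auto
  moreover have "{\<omega> \<in> space M. X \<omega> = a} \<union> {\<omega> \<in> space M. X \<omega> = b} = {\<omega> \<in> space M. X \<omega> = a \<or> X \<omega> = b}"
    by blast
  ultimately show ?thesis
    by (subst (asm) prob_eq_1) auto
qed

section \<open>Alternating runs in a Bernoulli sequence\<close>

definition determined_by :: "((nat \<Rightarrow> bool) \<Rightarrow> bool) \<Rightarrow> nat set \<Rightarrow> bool" where
  "determined_by Q K \<longleftrightarrow> (\<forall>f g. (\<forall>i\<in>K. f i = g i) \<longrightarrow> Q f = Q g)"

lemma PiM_count_space_bool:
  "finite K \<Longrightarrow> PiM K (\<lambda>_. count_space (UNIV :: bool set)) = count_space (PiE K (\<lambda>_. UNIV))"
  by (rule count_space_PiM_finite) auto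

lemma determined_by_alternates: "determined_by (\<lambda>f. alternates f m L) {m..m+L}"
  unfolding determined_by_def using alternates_cong by blast

lemma determined_by_restrict:
  assumes "determined_by Q K"
  shows "Q (restrict f K) = Q f"
proof -
  have "\<forall>i\<in>K. restrict f K i = f i" by simp
  then show ?thesis using assms unfolding determined_by_def by blast
qed

lemma sqrt_mult_one_minus_le_half:
  fixes p :: real
  assumes "0 \<le> p" "p \<le> 1"
  shows "sqrt (p * (1 - p)) \<le> 1/2"
proof -
  have "0 \<le> (2 * p - 1)\<^sup>2" by simp
  then show ?thesis
    using assms by (intro real_le_lsqrt) (auto simp: power2_eq_square algebra_simps)
qed

lemma alternating_pattern_mass_le:
  fixes p :: real
  assumes "0 \<le> p" "p \<le> 1"
  shows "(\<Sum>b\<in>UNIV. \<Prod>d\<le>L. if b \<noteq> odd d then p else 1 - p) \<le> sqrt (p * (1 - p)) ^ L"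
proof -
  let ?\<sigma> = "sqrt (p * (1 - p))"
  let ?w = "\<lambda>b d. if b \<noteq> odd d then p else 1 - p"
  have \<sigma>_sq: "?\<sigma>\<^sup>2 = p * (1 - p)" using assms by simp
  have "?\<sigma> \<le> 1/2"
    using assms by (rule sqrt_mult_one_minus_le_half)
  have "0 \<le> ?\<sigma>" using assms by simp
  have "2 * ?\<sigma>\<^sup>2 = ?\<sigma> * (2 * ?\<sigma>)" by (simp only: power2_eq_square mult_ac)
  also have "\<dots> \<le> ?\<sigma> * 1"
    using \<open>?\<sigma> \<le> 1/2\<close> \<open>0 \<le> ?\<sigma>\<close> by (intro mult_left_mono) auto
  finally have "2 * ?\<sigma>\<^sup>2 \<le> ?\<sigma>" by simp
  have pair: "?w b (Suc L) * ?w b (Suc (Suc L)) = p * (1 - p)" for b L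
    by (cases b; cases "odd L") auto
  show ?thesis
  proof (induction L rule: nat_induct2)
    case 1
    show ?case using \<open>2 * ?\<sigma>\<^sup>2 \<le> ?\<sigma>\<close> \<sigma>_sq by (simp add: UNIV_bool algebra_simps)
  next
    case (step L)
    have "(\<Prod>d\<le>Suc (Suc L). ?w b d) = (\<Prod>d\<le>L. ?w b d) * (?w b (Suc L) * ?w b (Suc (Suc L)))"
      for b by (simp only: prod.atMost_Suc mult.assoc)
    also have "\<dots> b = p * (1 - p) * (\<Prod>d\<le>L. ?w b d)" for b
      unfolding pair by (rule mult.commute)
    finally have "(\<Prod>d\<le>Suc (Suc L). ?w b d) = p * (1 - p) * (\<Prod>d\<le>L. ?w b d)" for b .
    then have "(\<Sum>b\<in>UNIV. \<Prod>d\<le>Suc (Suc L). ?w b d) = p * (1 - p) * (\<Sum>b\<in>UNIV. \<Prod>d\<le>L. ?w b d)"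
      by (simp only: sum_distrib_left)
    also have "\<dots> \<le> ?\<sigma>\<^sup>2 * ?\<sigma> ^ L"
      unfolding \<sigma>_sq using step assms by (intro mult_left_mono) auto
    also have "\<dots> = ?\<sigma> ^ Suc (Suc L)" by (simp add: power2_eq_square)
    finally show ?case by (simp only: add_2_eq_Suc')
  qed (simp add: UNIV_bool)
qed

locale bernoulli_seq = prob_space +
  fixes Z :: "nat \<Rightarrow> 'a \<Rightarrow> bool" and p :: real
  assumes indep_Z: "indep_vars (\<lambda>_. count_space UNIV) Z {1..}"
    and prob_Z: "\<And>i. 1 \<le> i \<Longrightarrow> prob {\<omega> \<in> space M. Z i \<omega>} = p"
begin

lemma p_nonneg: "0 \<le> p" and p_le_1: "p \<le> 1"
  using prob_Z[of 1] by auto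

lemma measurable_Z: "1 \<le> i \<Longrightarrow> Z i \<in> measurable M (count_space UNIV)"
  using indep_Z by (auto simp: indep_vars_def)

lemma sets_determined_by:
  assumes "finite K" "K \<subseteq> {1..}" "determined_by Q K"
  shows "{\<omega> \<in> space M. Q (\<lambda>i. Z i \<omega>)} \<in> events"
proof -
  have "(\<lambda>\<omega>. restrict (\<lambda>i. Z i \<omega>) K) \<in> measurable M (PiM K (\<lambda>_. count_space UNIV))"
    using assms(2) by (intro measurable_restrict measurable_Z) auto
  then have meas: "(\<lambda>\<omega>. restrict (\<lambda>i. Z i \<omega>) K) \<in> measurable M (count_space (PiE K (\<lambda>_. UNIV)))"
    using \<open>finite K\<close> by (simp add: PiM_count_space_bool)
  have "(\<lambda>\<omega>. restrict (\<lambda>i. Z i \<omega>) K) -` {f \<in> PiE K (\<lambda>_. UNIV). Q f} \<inter> space M \<in> events"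
    by (rule measurable_sets[OF meas]) auto
  moreover have "Q (restrict (\<lambda>i. Z i \<omega>) K) = Q (\<lambda>i. Z i \<omega>)" for \<omega>
    using \<open>determined_by Q K\<close> by (rule determined_by_restrict)
  ultimately show ?thesis
    by (simp add: vimage_def Int_def conj_commute)
qed

lemma indep_events_determined_by:
  assumes "\<And>k. k \<in> S \<Longrightarrow> K k \<subseteq> {1..}" "\<And>k. k \<in> S \<Longrightarrow> finite (K k)"
    and "disjoint_family_on K S" and det: "\<And>k. k \<in> S \<Longrightarrow> determined_by (Q k) (K k)"
  shows "indep_events (\<lambda>k. {\<omega> \<in> space M. Q k (\<lambda>i. Z i \<omega>)}) S"
proof -
  have "indep_events (\<lambda>k. {\<omega> \<in> space M. Q k (restrict (\<lambda>i. Z i \<omega>) (K k))}) S"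
    using assms(2)
    by (intro indep_eventsI_indep_vars[OF indep_vars_restrict[OF indep_Z assms(1,3)]])
      (auto simp: PiM_count_space_bool)
  moreover have "{\<omega> \<in> space M. Q k (restrict (\<lambda>i. Z i \<omega>) (K k))} = {\<omega> \<in> space M. Q k (\<lambda>i. Z i \<omega>)}"
    if "k \<in> S" for k
    using determined_by_restrict[OF det[OF that]] by simp
  then have "indep_sets (\<lambda>k. {{\<omega> \<in> space M. Q k (restrict (\<lambda>i. Z i \<omega>) (K k))}}) S
    = indep_sets (\<lambda>k. {{\<omega> \<in> space M. Q k (\<lambda>i. Z i \<omega>)}}) S"
    by (intro indep_sets_cong) auto
  ultimately show ?thesis
    unfolding indep_events_def_alt by simp
qed

lemma prob_Int_determined_by:
  assumes "K \<subseteq> {1..}" "K' \<subseteq> {1..}" "finite K" "finite K'" "K \<inter> K' = {}"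
    and "determined_by Q K" "determined_by Q' K'"
  shows "prob ({\<omega> \<in> space M. Q (\<lambda>i. Z i \<omega>)} \<inter> {\<omega> \<in> space M. Q' (\<lambda>i. Z i \<omega>)})
    = prob {\<omega> \<in> space M. Q (\<lambda>i. Z i \<omega>)} * prob {\<omega> \<in> space M. Q' (\<lambda>i. Z i \<omega>)}"
proof -
  have "indep_events (\<lambda>b. {\<omega> \<in> space M. (if b then Q else Q') (\<lambda>i. Z i \<omega>)}) UNIV"
    using assms
    by (intro indep_events_determined_by[where K = "\<lambda>b. if b then K else K'"])
      (auto simp: disjoint_family_on_def)
  then have "prob (\<Inter>b. {\<omega> \<in> space M. (if b then Q else Q') (\<lambda>i. Z i \<omega>)})
    = (\<Prod>b\<in>UNIV. prob {\<omega> \<in> space M. (if b then Q else Q') (\<lambda>i. Z i \<omega>)})"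
    by (auto simp: indep_events_def)
  then show ?thesis
    by (simp add: UNIV_bool Int_commute mult.commute)
qed

lemma prob_Z_pattern:
  assumes "finite I" "I \<subseteq> {1..}"
  shows "prob {\<omega> \<in> space M. \<forall>i\<in>I. Z i \<omega> = c i} = (\<Prod>i\<in>I. if c i then p else 1 - p)"
proof (cases "I = {}")
  case False
  have "indep_events (\<lambda>i. {\<omega> \<in> space M. Z i \<omega> = c i}) {1..}"
    by (rule indep_eventsI_indep_vars[OF indep_Z]) auto
  then have "prob (\<Inter>i\<in>I. {\<omega> \<in> space M. Z i \<omega> = c i}) = (\<Prod>i\<in>I. prob {\<omega> \<in> space M. Z i \<omega> = c i})"
    using assms False by (auto simp: indep_events_def)
  moreover have "(\<Inter>i\<in>I. {\<omega> \<in> space M. Z i \<omega> = c i}) = {\<omega> \<in> space M. \<forall>i\<in>I. Z i \<omega> = c i}"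
    using False by auto
  moreover have "prob {\<omega> \<in> space M. Z i \<omega> = c i} = (if c i then p else 1 - p)" if "i \<in> I" for i
  proof -
    have i: "1 \<le> i" using that assms by auto
    have "{\<omega> \<in> space M. Z i \<omega>} \<in> events"
      using measurable_Z[OF i] by measurable
    moreover have "{\<omega> \<in> space M. \<not> Z i \<omega>} = space M - {\<omega> \<in> space M. Z i \<omega>}" by auto
    ultimately show ?thesis
      using prob_Z[OF i] prob_compl by auto
  qed
  ultimately show ?thesis by simp
qed (simp add: prob_space)

definition run_event :: "nat \<Rightarrow> nat \<Rightarrow> 'a set" where
  "run_event m L = {\<omega> \<in> space M. alternates (\<lambda>i. Z i \<omega>) m L}"

definition run_free :: "nat \<Rightarrow> nat \<Rightarrow> nat \<Rightarrow> 'a set" where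
  "run_free a b L = {\<omega> \<in> space M. \<forall>m. a \<le> m \<longrightarrow> m + L < b \<longrightarrow> \<not> alternates (\<lambda>i. Z i \<omega>) m L}"

lemma determined_by_run_free:
  "determined_by (\<lambda>f. \<forall>m. a \<le> m \<longrightarrow> m + L < b \<longrightarrow> \<not> alternates f m L) {a..<b}"
  unfolding determined_by_def
proof (intro allI impI)
  fix f g :: "nat \<Rightarrow> bool" assume fg: "\<forall>i\<in>{a..<b}. f i = g i"
  have "alternates f m L = alternates g m L" if "a \<le> m" "m + L < b" for m
    using fg that by (intro alternates_cong) auto
  then show "(\<forall>m. a \<le> m \<longrightarrow> m + L < b \<longrightarrow> \<not> alternates f m L)
    = (\<forall>m. a \<le> m \<longrightarrow> m + L < b \<longrightarrow> \<not> alternates g m L)" by blast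
qed

lemma run_event_sets: "1 \<le> m \<Longrightarrow> run_event m L \<in> events"
  unfolding run_event_def by (rule sets_determined_by[OF _ _ determined_by_alternates]) auto

lemma run_free_sets: "1 \<le> a \<Longrightarrow> run_free a b L \<in> events"
  unfolding run_free_def by (rule sets_determined_by[OF _ _ determined_by_run_free]) auto

lemma prob_run_event_le:
  assumes "1 \<le> m"
  shows "prob (run_event m L) \<le> sqrt (p * (1 - p)) ^ L"
proof -
  define A where "A b = {\<omega> \<in> space M. \<forall>i\<in>{m..m+L}. Z i \<omega> = (b \<noteq> odd (i - m))}" for b
  have A: "A b \<in> events" for b
    unfolding A_def using assms
    by (intro sets_determined_by[where K = "{m..m+L}"]) (auto simp: determined_by_def)
  have "prob (A b) = (\<Prod>i\<in>{m..m+L}. if b \<noteq> odd (i - m) then p else 1 - p)" for b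
    unfolding A_def using assms by (intro prob_Z_pattern) auto
  also have "\<dots> b = (\<Prod>d\<le>L. if b \<noteq> odd d then p else 1 - p)" for b
    using prod.shift_bounds_cl_nat_ivl[of "\<lambda>i. if b \<noteq> odd (i - m) then p else 1 - p" 0 m L]
    by (simp add: atLeast0AtMost add.commute)
  finally have prob_A: "prob (A b) = (\<Prod>d\<le>L. if b \<noteq> odd d then p else 1 - p)" for b .
  have "run_event m L = A True \<union> A False"
    unfolding run_event_def A_def alternates_iff_pattern ex_bool_eq by blast
  moreover have "A True \<inter> A False = {}"
    unfolding A_def by (auto dest!: bspec[where x = m])
  ultimately have "prob (run_event m L) = prob (A True) + prob (A False)"
    using finite_measure_Union[OF A A] by simp
  also have "\<dots> \<le> sqrt (p * (1 - p)) ^ L"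
    using alternating_pattern_mass_le[OF p_nonneg p_le_1, of L] by (simp add: prob_A UNIV_bool)
  finally show ?thesis .
qed

lemma prob_not_run_free_le:
  assumes "1 \<le> a"
  shows "prob (space M - run_free a b L) \<le> real (b - a - L) * sqrt (p * (1 - p)) ^ L"
proof -
  have "space M - run_free a b L \<subseteq> (\<Union>m\<in>{a..<b - L}. run_event m L)"
    by (auto simp: run_free_def run_event_def)
  then have "prob (space M - run_free a b L) \<le> prob (\<Union>m\<in>{a..<b - L}. run_event m L)"
    using assms by (intro finite_measure_mono) (auto intro!: run_event_sets)
  also have "\<dots> \<le> (\<Sum>m\<in>{a..<b - L}. prob (run_event m L))"
    using assms by (intro finite_measure_subadditive_finite) (auto intro!: run_event_sets)
  also have "\<dots> \<le> (\<Sum>m\<in>{a..<b - L}. sqrt (p * (1 - p)) ^ L)"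
    using assms by (intro sum_mono prob_run_event_le) auto
  finally show ?thesis by (simp add: add.commute)
qed

lemma run_free_eq: "run_free a (a + t + L) L = space M - (\<Union>j<t. run_event (a + j) L)"
proof (intro equalityI subsetI)
  fix \<omega> assume "\<omega> \<in> run_free a (a + t + L) L"
  then show "\<omega> \<in> space M - (\<Union>j<t. run_event (a + j) L)"
    by (auto simp: run_free_def run_event_def)
next
  fix \<omega> assume \<omega>: "\<omega> \<in> space M - (\<Union>j<t. run_event (a + j) L)"
  have "\<not> alternates (\<lambda>i. Z i \<omega>) m L" if "a \<le> m" "m + L < a + t + L" for m
  proof -
    have "m - a < t" "a + (m - a) = m" using that by auto
    then have "\<omega> \<notin> run_event m L" using \<omega> by (metis DiffD2 UN_I lessThan_iff)
    then show ?thesis using \<omega> by (simp add: run_event_def)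
  qed
  then show "\<omega> \<in> run_free a (a + t + L) L"
    using \<omega> by (simp add: run_free_def)
qed

text \<open>Being run-free on \<open>[a, a + s)\<close> and having a run on \<open>[a + s, a + s + L]\<close> involve disjoint
  variables; this is the independence the sliding-window local lemma asks for.\<close>
lemma prob_run_free_ge:
  assumes "1 \<le> a" "0 \<le> x" "x < 1" and "sqrt (p * (1 - p)) ^ L \<le> x * (1 - x) ^ L"
  shows "(1 - x) ^ (b - a) \<le> prob (run_free a b L)"
proof (cases "a + L < b")
  case False
  then have "run_free a b L = space M" by (auto simp: run_free_def)
  then show ?thesis using assms by (simp add: prob_space power_le_one)
next
  case True
  define t where "t = b - a - L"
  have b: "b = a + t + L" using True by (simp add: t_def)
  have "(1 - x) ^ t \<le> prob (space M - (\<Union>j<t. run_event (a + j) L))"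
  proof (rule prob_avoid_sliding_window)
    show "run_event (a + j) L \<in> events" for j
      using assms by (intro run_event_sets) simp
    show "prob (run_event (a + j) L) \<le> sqrt (p * (1 - p)) ^ L" for j
      using assms by (intro prob_run_event_le) simp
    fix s assume "L \<le> s"
    then have "space M - (\<Union>j<s - L. run_event (a + j) L) = run_free a (a + s) L"
      using run_free_eq[of a "s - L" L] by simp
    moreover have "prob (run_free a (a + s) L \<inter> run_event (a + s) L)
      = prob (run_free a (a + s) L) * prob (run_event (a + s) L)"
      unfolding run_free_def run_event_def using assms
      by (intro prob_Int_determined_by[where K = "{a..<a + s}" and K' = "{a + s..a + s + L}"]
          determined_by_run_free determined_by_alternates) auto
    ultimately show "prob ((space M - (\<Union>j<s - L. run_event (a + j) L)) \<inter> run_event (a + s) L)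
      = prob (space M - (\<Union>j<s - L. run_event (a + j) L)) * prob (run_event (a + s) L)"
      by simp
  qed (use assms in auto)
  moreover have "(1 - x) ^ (b - a) \<le> (1 - x) ^ t"
    using assms by (intro power_decreasing) (auto simp: t_def)
  ultimately show ?thesis
    using run_free_eq[of a t L] b by simp
qed

end

section \<open>Choice of the scales\<close>

lemma two_square_plus_two_le_pow2: "7 \<le> g \<Longrightarrow> 2 * (real g ^ 2 + 2) \<le> 2 ^ g"
proof (induction g rule: dec_induct)
  case (step g)
  have "0 \<le> (real g - 1)\<^sup>2" by simp
  then have "2 * (real (Suc g) ^ 2 + 2) \<le> 2 * (2 * (real g ^ 2 + 2))"
    by (simp add: power2_eq_square algebra_simps)
  also have "\<dots> \<le> 2 * 2 ^ g" using step.IH by simp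
  finally show ?case by simp
qed simp

lemma square_plus_two_mult_half_pow_le:
  assumes "7 \<le> g"
  shows "(real g ^ 2 + 2) * (1/2) ^ (2 * g - 1) \<le> (1/2) ^ g"
proof -
  obtain h where g: "g = Suc h" using assms by (cases g) auto
  have "2 * g - 1 = g + h" and "(1/2::real) ^ h = 2 * (1/2) ^ g"
    by (simp_all add: g)
  then have "(1/2::real) ^ (2 * g - 1) = 2 * ((1/2) ^ g * (1/2) ^ g)"
    by (simp add: power_add)
  then have "(real g ^ 2 + 2) * (1/2) ^ (2 * g - 1) = 2 * (real g ^ 2 + 2) * (1/2) ^ g * (1/2) ^ g"
    by simp
  also have "\<dots> \<le> 2 ^ g * (1/2) ^ g * (1/2) ^ g"
    using two_square_plus_two_le_pow2[OF assms] by (intro mult_right_mono) auto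
  also have "\<dots> = (1/2) ^ g"
    by (simp add: power_one_over)
  finally show ?thesis .
qed

locale switch_scale =
  fixes lam eps :: real
  assumes lam_ge_2: "2 \<le> lam" and eps_pos: "0 < eps"
begin

definition bound :: "nat \<Rightarrow> real" where
  "bound N = log lam (real N) - log lam (log lam (log lam (real N))) + log lam (log lam (exp 1)) + 1 + eps"

definition scale :: real where "scale = lam powr (-1 - eps/2)"

definition target :: "nat \<Rightarrow> real" where "target L = scale * lam ^ L * ln (real L)"

definition horizon :: "nat \<Rightarrow> nat" where "horizon L = nat \<lceil>target L\<rceil>"

definition kappa :: real where "kappa = 2 powr (min eps 1 / 4)"

definition weight :: "nat \<Rightarrow> real" where "weight L = kappa * (1/lam) ^ L"

definition large :: "nat \<Rightarrow> bool" where
  "large L \<longleftrightarrow> real L / lam ^ L \<le> min scale ((kappa - 1) / (2 * kappa)) \<and> 1 \<le> ln (real L)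
     \<and> ln 2 / (lam powr (eps/2) - 1) \<le> ln (real L) \<and> 3 + eps \<le> real L"

lemma lam_pos: "0 < lam" and lam_gt_1: "1 < lam"
  using lam_ge_2 by auto

lemma scale_pos: "0 < scale"
  using lam_pos by (simp add: scale_def)

lemma scale_le: "scale \<le> 2 powr (-1 - eps/2)"
  unfolding scale_def using eps_pos lam_ge_2 by (intro powr_mono2') auto

lemma scale_le_half: "scale \<le> 1/2"
proof -
  have "2 powr (-1 - eps/2) \<le> 2 powr (-1::real)" using eps_pos by (intro powr_mono) auto
  then show ?thesis using scale_le by (simp add: powr_minus_divide)
qed

lemma kappa_gt_1: "1 < kappa"
  using eps_pos by (simp add: kappa_def)

lemma kappa_sq: "kappa\<^sup>2 = 2 powr (min eps 1 / 2)"
  by (simp add: kappa_def power2_eq_square powr_add[symmetric])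

lemma kappa_sq_le_2: "kappa\<^sup>2 \<le> 2"
proof -
  have "2 powr (min eps 1 / 2) \<le> 2 powr (1::real)" by (intro powr_mono) auto
  then show ?thesis using kappa_sq by simp
qed

lemma kappa_le_2: "kappa \<le> 2"
  using kappa_sq_le_2 kappa_gt_1 by (smt (verit) power2_eq_square mult_le_cancel_left1)

text \<open>The factor \<open>2 powr (min eps 1 / 2)\<close> is absorbed by the \<open>2 powr (- eps/2)\<close> in \<open>scale\<close>.\<close>
lemma kappa_sq_scale: "kappa\<^sup>2 * scale \<le> 1/2"
proof -
  have "kappa\<^sup>2 * scale \<le> 2 powr (min eps 1 / 2) * 2 powr (-1 - eps/2)"
    using scale_le by (simp add: kappa_sq)
  also have "\<dots> = 2 powr (min eps 1 / 2 - 1 - eps/2)"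
    by (subst powr_add[symmetric]) (simp add: algebra_simps)
  also have "\<dots> \<le> 2 powr (-1::real)" by (intro powr_mono) auto
  finally show ?thesis by (simp add: powr_minus_divide)
qed

lemma eventually_large: "eventually large sequentially"
proof -
  have "0 < min scale ((kappa - 1) / (2 * kappa))"
    using scale_pos kappa_gt_1 by simp
  moreover have "(\<lambda>L. real L / lam ^ L) \<longlonglongrightarrow> 0"
    using lim_n_over_pown[of lam] lam_gt_1 by simp
  ultimately have "eventually (\<lambda>L. real L / lam ^ L < min scale ((kappa - 1) / (2 * kappa))) sequentially"
    using order_tendstoD(2) by blast
  moreover have "filterlim (\<lambda>L. ln (real L)) at_top sequentially"
    by (rule filterlim_compose[OF ln_at_top filterlim_real_sequentially])
  then have "eventually (\<lambda>L. max 1 (ln 2 / (lam powr (eps/2) - 1)) \<le> ln (real L)) sequentially"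
    unfolding filterlim_at_top by blast
  moreover have "eventually (\<lambda>L. 3 + eps \<le> real L) sequentially"
    using filterlim_real_sequentially by (simp add: filterlim_at_top)
  ultimately show ?thesis
    by eventually_elim (auto simp: large_def)
qed

lemma large_ge_3: "large L \<Longrightarrow> 3 \<le> real L"
  using eps_pos by (simp add: large_def)

lemma large_le_pow: "large L \<Longrightarrow> real L \<le> scale * lam ^ L"
  using lam_pos by (simp add: large_def divide_le_eq mult.commute)

lemma target_nonneg: "1 \<le> L \<Longrightarrow> 0 \<le> target L"
  using scale_pos lam_pos by (simp add: target_def)

lemma horizon_bounds:
  assumes "1 \<le> L"
  shows "target L \<le> real (horizon L)" "real (horizon L) \<le> target L + 1"
proof -
  have "real (horizon L) = real_of_int \<lceil>target L\<rceil>"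
    using target_nonneg[OF assms] by (simp add: horizon_def)
  then show "target L \<le> real (horizon L)" "real (horizon L) \<le> target L + 1"
    by (simp_all add: of_int_ceiling_le_add_one)
qed

lemma horizon_mono:
  assumes "1 \<le> L" "L \<le> L'"
  shows "horizon L \<le> horizon L'"
proof -
  have "target L \<le> target L'"
    unfolding target_def using assms scale_pos lam_gt_1
    by (intro mult_mono power_increasing) auto
  then show ?thesis unfolding horizon_def by (intro nat_mono ceiling_mono)
qed

lemma target_le: "1 \<le> L \<Longrightarrow> target L \<le> lam ^ L * real L"
proof -
  assume "1 \<le> L"
  have "ln (real L) \<le> real L" using ln_le_minus_one[of "real L"] \<open>1 \<le> L\<close> by simp
  then have "scale * lam ^ L * ln (real L) \<le> 1 * lam ^ L * real L"
    using \<open>1 \<le> L\<close> scale_le_half scale_pos lam_pos by (intro mult_mono) auto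
  then show ?thesis by (simp add: target_def)
qed

lemma large_le_horizon:
  assumes "large L"
  shows "L \<le> horizon L"
proof -
  have "real L \<le> scale * lam ^ L * 1" using large_le_pow[OF assms] by simp
  also have "\<dots> \<le> target L"
    unfolding target_def using assms scale_pos lam_pos by (intro mult_left_mono) (auto simp: large_def)
  also have "\<dots> \<le> real (horizon L)"
    using large_ge_3[OF assms] by (intro horizon_bounds) simp
  finally show ?thesis by simp
qed

lemma large_mult_weight_le:
  assumes "large L"
  shows "real L * weight L \<le> (kappa - 1) / 2"
proof -
  have "real L * weight L = kappa * (real L / lam ^ L)"
    by (simp add: weight_def power_one_over)
  also have "\<dots> \<le> kappa * ((kappa - 1) / (2 * kappa))"
    using assms kappa_gt_1 by (intro mult_left_mono) (auto simp: large_def)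
  also have "\<dots> = (kappa - 1) / 2"
    using kappa_gt_1 by (simp add: field_simps)
  finally show ?thesis .
qed

lemma weight_nonneg: "0 \<le> weight L"
  using kappa_gt_1 lam_pos by (simp add: weight_def)

lemma large_weight_le:
  assumes "large L"
  shows "2 * weight L \<le> kappa - 1" "weight L \<le> 1/2"
proof -
  have "weight L \<le> real L * weight L"
    using large_ge_3[OF assms] mult_right_mono[of 1 "real L" "weight L"] weight_nonneg by simp
  then show "2 * weight L \<le> kappa - 1"
    using large_mult_weight_le[OF assms] by simp
  then show "weight L \<le> 1/2"
    using kappa_le_2 by simp
qed

text \<open>This is the hypothesis of the sliding-window local lemma for runs of length \<open>L\<close>, whose
  probability is at most \<open>(1/lam)^L\<close>.\<close>
lemma large_local_lemma_condition:
  assumes "large L"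
  shows "(1/lam) ^ L \<le> weight L * (1 - weight L) ^ L"
proof -
  have "1 - real L * weight L \<le> (1 - weight L) ^ L"
    using Bernoulli_inequality[of "- weight L" L] large_weight_le[OF assms] kappa_le_2 by simp
  moreover have "1 / kappa \<le> 1 - (kappa - 1) / 2"
  proof -
    have "1 - (kappa - 1) / 2 - 1 / kappa = (kappa - 1) * (2 - kappa) / (2 * kappa)"
      using kappa_gt_1 by (simp add: field_simps)
    also have "\<dots> \<ge> 0"
      using kappa_gt_1 kappa_le_2 by simp
    finally show ?thesis by simp
  qed
  ultimately have "1 / kappa \<le> (1 - weight L) ^ L"
    using large_mult_weight_le[OF assms] by linarith
  then have "weight L * (1 / kappa) \<le> weight L * (1 - weight L) ^ L"
    using weight_nonneg by (rule mult_left_mono)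
  then show ?thesis
    using kappa_gt_1 by (simp add: weight_def)
qed

lemma large_ln_one_minus_weight:
  assumes "large L"
  shows "- (weight L * kappa) \<le> ln (1 - weight L)"
proof -
  have w: "0 \<le> weight L" "weight L \<le> 1/2" "2 * weight L \<le> kappa - 1"
    using weight_nonneg large_weight_le[OF assms] by auto
  have "- (weight L * kappa) \<le> - weight L - 2 * (weight L)\<^sup>2"
    using mult_left_mono[OF w(3) w(1)] by (simp add: power2_eq_square algebra_simps)
  also have "\<dots> \<le> ln (1 - weight L)"
    by (rule ln_one_minus_pos_lower_bound[OF w(1,2)])
  finally show ?thesis .
qed

lemma large_horizon_weight_le:
  assumes "large L"
  shows "real (horizon L + 1) * (weight L * kappa) \<le> 1/2 * ln (real L) + 1"
proof -
  have L3: "3 \<le> real L" using large_ge_3[OF assms] .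
  have small: "(1/lam) ^ L \<le> 1/4"
  proof -
    have "(1/lam) ^ L \<le> (1/2) ^ L" using lam_ge_2 by (intro power_mono) (auto simp: divide_le_eq)
    also have "\<dots> \<le> (1/2)\<^sup>2" using L3 by (intro power_decreasing) auto
    finally show ?thesis by (simp add: power2_eq_square)
  qed
  have "real (horizon L + 1) * (weight L * kappa) \<le> (target L + 2) * (weight L * kappa)"
    using horizon_bounds(2)[of L] L3 weight_nonneg kappa_gt_1 by (intro mult_right_mono) auto
  also have "\<dots> = kappa\<^sup>2 * scale * ln (real L) + 2 * kappa\<^sup>2 * (1/lam) ^ L"
    using lam_pos by (simp add: weight_def target_def power2_eq_square power_one_over algebra_simps)
  also have "\<dots> \<le> 1/2 * ln (real L) + 2 * 2 * (1/4)"
    using L3 kappa_sq_scale kappa_sq_le_2 small lam_pos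
    by (intro add_mono mult_right_mono mult_mono) auto
  finally show ?thesis by simp
qed

lemma large_survival:
  assumes "large L"
  shows "exp (-1) / sqrt (real L) \<le> (1 - weight L) ^ (horizon L + 1)"
proof -
  let ?w = "weight L" and ?n = "horizon L + 1"
  have "- (1/2 * ln (real L) + 1) \<le> real ?n * (- (?w * kappa))"
    using large_horizon_weight_le[OF assms] by simp
  also have "\<dots> \<le> real ?n * ln (1 - ?w)"
    using large_ln_one_minus_weight[OF assms] by (intro mult_left_mono) auto
  finally have exponent: "- (1/2 * ln (real L) + 1) \<le> real ?n * ln (1 - ?w)" .
  have "sqrt (real L) = exp (1/2 * ln (real L))"
    using large_ge_3[OF assms] by (simp add: powr_half_sqrt[symmetric] powr_def)
  then have "exp (-1) / sqrt (real L) = exp (- (1/2 * ln (real L) + 1))"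
    by (simp only: exp_diff[symmetric]) simp
  also have "\<dots> \<le> exp (real ?n * ln (1 - ?w))"
    using exponent by simp
  also have "\<dots> = exp (ln (1 - ?w)) ^ ?n"
    by (rule exp_of_nat_mult)
  also have "\<dots> = (1 - ?w) ^ ?n"
    using large_weight_le(2)[OF assms] by simp
  finally show ?thesis .
qed

lemma bound_eq:
  assumes "1 < log lam (real N)"
  shows "bound N = log lam (real N) - log lam (ln (log lam (real N))) + 1 + eps"
proof -
  let ?v = "log lam (real N)"
  have "log lam (log lam ?v) = log lam (ln ?v / ln lam)"
    by (simp add: log_def)
  also have "\<dots> = log lam (ln ?v) - log lam (ln lam)"
    using assms lam_gt_1 by (intro log_divide_pos) auto
  finally have "log lam (log lam ?v) = log lam (ln ?v) - log lam (ln lam)" .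
  moreover have "log lam (log lam (exp 1)) = - log lam (ln lam)"
    by (simp add: log_recip)
  ultimately show ?thesis
    by (simp add: bound_def)
qed

lemma large_log_horizon_ge:
  assumes "large L"
  shows "real L - 1 - eps/2 + log lam (ln (real L)) \<le> log lam (real (horizon L))"
proof -
  have L: "1 \<le> ln (real L)" "3 \<le> real L"
    using assms large_ge_3 by (auto simp: large_def)
  have "log lam (target L) = log lam scale + log lam (lam ^ L) + log lam (ln (real L))"
    unfolding target_def using L scale_pos lam_pos by (simp add: log_mult_pos)
  also have "\<dots> = real L - 1 - eps/2 + log lam (ln (real L))"
    using lam_gt_1 by (simp add: scale_def)
  finally have "log lam (target L) = real L - 1 - eps/2 + log lam (ln (real L))" .
  moreover have "log lam (target L) \<le> log lam (real (horizon L))"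
    using L horizon_bounds(1)[of L] large_le_horizon[OF assms] scale_pos lam_gt_1
    by (subst log_le_cancel_iff) (auto simp: target_def)
  ultimately show ?thesis by simp
qed

lemma large_log_horizon_le:
  assumes "large L"
  shows "log lam (real (horizon L)) \<le> 2 * real L"
proof -
  have L3: "3 \<le> real L" using large_ge_3[OF assms] .
  have "scale * lam ^ L \<le> 1 * lam ^ L"
    using scale_le_half lam_pos by (intro mult_right_mono) auto
  then have L_le: "real L \<le> lam ^ L"
    using large_le_pow[OF assms] by simp
  have "real (horizon L) \<le> target L + 1"
    using L3 by (intro horizon_bounds) simp
  also have "\<dots> \<le> lam ^ L * real L"
  proof -
    have "ln (real L) \<le> real L" using ln_le_minus_one[of "real L"] L3 by simp
    then have "target L \<le> 1/2 * lam ^ L * real L"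
      unfolding target_def using scale_le_half scale_pos lam_pos L3 by (intro mult_mono) auto
    moreover have "1 * 3 \<le> lam ^ L * real L"
      using L3 lam_gt_1 by (intro mult_mono) auto
    ultimately show ?thesis by simp
  qed
  finally have "log lam (real (horizon L)) \<le> log lam (lam ^ L * real L)"
    using L3 large_le_horizon[OF assms] lam_gt_1 by (subst log_le_cancel_iff) auto
  also have "\<dots> = real L + log lam (real L)"
    using L3 lam_gt_1 by (simp add: log_mult_pos)
  moreover have "log lam (real L) \<le> log lam (lam ^ L)"
    using L_le L3 lam_gt_1 by (subst log_le_cancel_iff) auto
  ultimately show ?thesis
    using lam_gt_1 by simp
qed

lemma large_le_bound:
  assumes "large L"
  shows "real L \<le> bound (horizon L)"
proof -
  let ?v = "log lam (real (horizon L))"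
  let ?B = "lam powr (eps/2)"
  have L: "1 \<le> ln (real L)" "ln 2 / (?B - 1) \<le> ln (real L)" "3 + eps \<le> real L"
    using assms by (auto simp: large_def)
  have "0 \<le> log lam (ln (real L))"
    using L(1) lam_gt_1 by simp
  then have "1 < ?v"
    using large_log_horizon_ge[OF assms] L(3) eps_pos by linarith
  have B: "1 < ?B"
    using lam_gt_1 eps_pos by simp
  have "ln ?v \<le> ln (2 * real L)"
    using large_log_horizon_le[OF assms] \<open>1 < ?v\<close> by simp
  also have "\<dots> = ln 2 + ln (real L)"
    using L(3) eps_pos by (simp add: ln_mult)
  also have "\<dots> \<le> ?B * ln (real L)"
    using L(2) B by (simp add: divide_le_eq algebra_simps)
  finally have "log lam (ln ?v) \<le> log lam (?B * ln (real L))"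
    using \<open>1 < ?v\<close> lam_gt_1 L(1) B by (subst log_le_cancel_iff) auto
  also have "\<dots> = eps/2 + log lam (ln (real L))"
    using L(1) lam_gt_1 by (simp add: log_mult_pos)
  finally show ?thesis
    using bound_eq[OF \<open>1 < ?v\<close>] large_log_horizon_ge[OF assms] by simp
qed

text \<open>Runs of length \<open>g\<^sup>2\<close> starting before the horizon of \<open>(g - 1)\<^sup>2\<close> are summably rare.\<close>
lemma horizon_tail:
  assumes "7 \<le> g"
  shows "real (horizon ((g - 1)\<^sup>2) + 1) * (1/lam) ^ (g\<^sup>2) \<le> (1/2) ^ g"
proof -
  obtain h where g: "g = Suc h" using assms by (cases g) auto
  define L where "L = (g - 1)\<^sup>2"
  have L: "L = h * h" "1 \<le> L" "g\<^sup>2 = L + (2 * h + 1)"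
    using assms by (auto simp: L_def g power2_eq_square)
  have "real (horizon L) + 1 \<le> target L + 2"
    using horizon_bounds(2)[OF L(2)] by simp
  also have "\<dots> \<le> lam ^ L * (real L + 2)"
  proof -
    have "1 \<le> lam ^ L" using lam_gt_1 by simp
    then have "target L + 2 \<le> lam ^ L * real L + 2 * lam ^ L"
      using target_le[OF L(2)] by linarith
    then show ?thesis by (simp add: algebra_simps)
  qed
  finally have "real (horizon L + 1) * (1/lam) ^ (g\<^sup>2) \<le> lam ^ L * (real L + 2) * (1/lam) ^ (g\<^sup>2)"
    using lam_pos by (intro mult_right_mono) auto
  also have "\<dots> = (real L + 2) * (1/lam) ^ (2 * h + 1)"
    using lam_pos by (simp add: L(3) power_add power_one_over)
  also have "\<dots> \<le> (real g ^ 2 + 2) * (1/2) ^ (2 * h + 1)"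
  proof (rule mult_mono)
    have "real h * real h \<le> (1 + real h) * (1 + real h)"
      by (intro mult_mono) auto
    then show "real L + 2 \<le> real g ^ 2 + 2"
      using L(1) by (simp add: g power2_eq_square)
    show "(1/lam) ^ (2 * h + 1) \<le> (1/2) ^ (2 * h + 1)"
      using lam_ge_2 by (intro power_mono) (auto simp: divide_le_eq)
    show "0 \<le> (1/lam) ^ (2 * h + 1)"
      using lam_pos by (intro zero_le_power) simp
  qed simp
  also have "\<dots> \<le> (1/2) ^ g"
    using square_plus_two_mult_half_pow_le[OF assms] by (simp add: g)
  finally show ?thesis by (simp add: L_def)
qed

end

section \<open>Infinitely many short longest runs\<close>

locale bernoulli_switches = bernoulli_seq +
  fixes eps :: real
  assumes p_pos: "0 < p" and p_less_1: "p < 1" and eps_gt_0: "0 < eps"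
begin

sublocale scale: switch_scale "1 / sqrt (p * (1 - p))" eps
proof
  have "0 < sqrt (p * (1 - p))" using p_pos p_less_1 by simp
  moreover have "sqrt (p * (1 - p)) \<le> 1/2"
    using p_nonneg p_le_1 by (rule sqrt_mult_one_minus_le_half)
  ultimately show "2 \<le> 1 / sqrt (p * (1 - p))"
    by (simp add: le_divide_eq mult.commute)
qed (rule eps_gt_0)

definition offset :: nat where
  "offset = (SOME k. 7 \<le> k \<and> (\<forall>L\<ge>k. scale.large L))"

lemma offset: "7 \<le> offset" "offset \<le> L \<Longrightarrow> scale.large L"
proof -
  obtain k where "\<forall>L\<ge>k. scale.large L"
    using scale.eventually_large by (auto simp: eventually_sequentially)
  then have "\<exists>k. 7 \<le> k \<and> (\<forall>L\<ge>k. scale.large L)"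
    by (intro exI[of _ "max 7 k"]) auto
  from someI_ex[OF this] show "7 \<le> offset" "offset \<le> L \<Longrightarrow> scale.large L"
    unfolding offset_def by auto
qed

text \<open>\<open>block_event k\<close> excludes alternating runs of length \<open>run_len k\<close> starting in
  \<open>[start k, horizon (run_len k) + 1 - run_len k]\<close>, and these blocks involve disjoint variables;
  \<open>prefix_event k\<close> excludes such runs starting before \<open>start k\<close>.\<close>
definition run_len :: "nat \<Rightarrow> nat" where "run_len k = (k + offset)\<^sup>2"

definition start :: "nat \<Rightarrow> nat" where "start k = scale.horizon ((k + offset - 1)\<^sup>2) + 2"

definition block_event :: "nat \<Rightarrow> 'a set" where
  "block_event k = run_free (start k) (scale.horizon (run_len k) + 2) (run_len k)"

definition prefix_event :: "nat \<Rightarrow> 'a set" where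
  "prefix_event k = run_free 1 (start k + run_len k) (run_len k)"

lemma offset_le_run_len: "offset \<le> run_len k"
  using le_square[of "k + offset"] unfolding run_len_def power2_eq_square by linarith

lemma le_run_len: "k \<le> run_len k"
  using le_square[of "k + offset"] unfolding run_len_def power2_eq_square by linarith

lemma large_run_len: "scale.large (run_len k)"
  using offset_le_run_len by (rule offset(2))

lemma start_ge_2: "2 \<le> start k"
  by (simp add: start_def)

lemma block_before_start:
  assumes "k < k'"
  shows "scale.horizon (run_len k) + 2 \<le> start k'"
proof -
  have "run_len k \<le> (k' + offset - 1)\<^sup>2"
    using assms by (simp add: run_len_def power_mono)
  moreover have "1 \<le> run_len k"
    using offset(1) offset_le_run_len[of k] by simp
  ultimately show ?thesis
    unfolding start_def using scale.horizon_mono by simp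
qed

lemma AE_eventually_prefix_event: "AE \<omega> in M. eventually (\<lambda>k. \<omega> \<in> prefix_event k) sequentially"
proof -
  have "prob (space M - prefix_event k) \<le> (1/2) ^ k" for k
  proof -
    have "prob (space M - prefix_event k)
      \<le> real (scale.horizon ((k + offset - 1)\<^sup>2) + 1) * sqrt (p * (1 - p)) ^ run_len k"
      using prob_not_run_free_le[of 1 "start k + run_len k" "run_len k"]
      by (simp add: prefix_event_def start_def)
    also have "\<dots> \<le> (1/2) ^ (k + offset)"
      using scale.horizon_tail[of "k + offset"] offset(1) by (simp add: run_len_def)
    also have "\<dots> \<le> (1/2) ^ k"
      by (intro power_decreasing) auto
    finally show ?thesis .
  qed
  then have "summable (\<lambda>k. prob (space M - prefix_event k))"
    by (intro summable_comparison_test'[OF summable_geometric[of "1/2"]]) auto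
  moreover have "space M - prefix_event k \<in> events" for k
    unfolding prefix_event_def by (intro sets.Diff sets.top run_free_sets) simp
  ultimately have "AE \<omega> in M. eventually (\<lambda>k. \<omega> \<in> space M - (space M - prefix_event k)) sequentially"
    by (intro borel_cantelli_AE1) (auto simp: less_top[symmetric])
  then show ?thesis
    by (rule AE_mp) (auto intro!: AE_I2 elim: eventually_mono)
qed

lemma prob_block_event_ge: "exp (-1) / real (k + offset) \<le> prob (block_event k)"
proof -
  let ?L = "run_len k" and ?x = "scale.weight (run_len k)"
  have x: "0 \<le> ?x" "?x < 1"
    using scale.weight_nonneg scale.large_weight_le[OF large_run_len[of k]] by auto
  have "exp (-1) / real (k + offset) = exp (-1) / sqrt (real ?L)"
    by (simp add: run_len_def)
  also have "\<dots> \<le> (1 - ?x) ^ (scale.horizon ?L + 1)"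
    by (rule scale.large_survival[OF large_run_len])
  also have "\<dots> \<le> (1 - ?x) ^ (scale.horizon ?L + 2 - start k)"
    using x start_ge_2[of k] by (intro power_decreasing) auto
  also have "\<dots> \<le> prob (block_event k)"
    unfolding block_event_def
    using x scale.large_local_lemma_condition[OF large_run_len] start_ge_2[of k]
    by (intro prob_run_free_ge) auto
  finally show ?thesis .
qed

lemma indep_block_events: "indep_events block_event UNIV"
proof -
  define K where "K k = {start k..<scale.horizon (run_len k) + 2}" for k
  have "disjoint_family_on K UNIV"
    unfolding disjoint_family_on_def
  proof (intro ballI impI)
    fix k k' :: nat assume "k \<noteq> k'"
    then consider "k < k'" | "k' < k" by linarith
    then show "K k \<inter> K k' = {}"
      by cases (use block_before_start in \<open>fastforce simp: K_def\<close>)+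
  qed
  moreover have "K k \<subseteq> {1..}" for k
    using start_ge_2[of k] by (auto simp: K_def)
  ultimately show ?thesis
    unfolding block_event_def run_free_def
    by (intro indep_events_determined_by[where K = K]) (auto simp: K_def intro: determined_by_run_free)
qed

lemma AE_infinitely_many_block_events: "AE \<omega> in M. infinite {k. \<omega> \<in> block_event k}"
proof (rule borel_cantelli_AE2[OF indep_block_events])
  have "\<not> summable (\<lambda>k. 1 / real (k + offset))"
    using not_summable_harmonic[where 'a = real] summable_iff_shift[of "\<lambda>k. 1 / real k" offset]
    by (simp add: inverse_eq_divide)
  then have "\<not> summable (\<lambda>k. exp (-1) * (1 / real (k + offset)))"
    by (subst summable_cmult_iff) simp
  then show "\<not> summable (\<lambda>k. prob (block_event k))"
    using summable_comparison_test'[of "\<lambda>k. prob (block_event k)" 0 "\<lambda>k. exp (-1) * (1 / real (k + offset))"]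
      prob_block_event_ge by auto
qed

lemma no_alternation_on_block:
  assumes "\<omega> \<in> block_event k" "\<omega> \<in> prefix_event k"
    and "1 \<le> m" "m + run_len k \<le> scale.horizon (run_len k) + 1"
  shows "\<not> alternates (\<lambda>i. Z i \<omega>) m (run_len k)"
proof (cases "m < start k")
  case True
  then show ?thesis using assms(2,3) by (auto simp: prefix_event_def run_free_def)
next
  case False
  then show ?thesis using assms(1,4) by (auto simp: block_event_def run_free_def)
qed

theorem AE_infinitely_many_short_runs:
  "AE \<omega> in M. infinite {N. 1 \<le> N \<and> (\<exists>L. real L \<le> scale.bound N \<and>
     (\<forall>m. 1 \<le> m \<longrightarrow> m + L \<le> N + 1 \<longrightarrow> \<not> alternates (\<lambda>i. Z i \<omega>) m L))}"
  using AE_infinitely_many_block_events AE_eventually_prefix_event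
proof eventually_elim
  case (elim \<omega>)
  then obtain k0 where k0: "\<And>k. k0 \<le> k \<Longrightarrow> \<omega> \<in> prefix_event k"
    by (auto simp: eventually_sequentially)
  show ?case
    unfolding infinite_nat_iff_unbounded_le
  proof
    fix n
    obtain k where k: "max k0 n \<le> k" "\<omega> \<in> block_event k"
      using elim(1) unfolding infinite_nat_iff_unbounded_le by blast
    let ?N = "scale.horizon (run_len k)"
    have "n \<le> ?N" "1 \<le> ?N"
      using k(1) le_run_len[of k] scale.large_le_horizon[OF large_run_len, of k] offset(1)
        offset_le_run_len[of k] by auto
    moreover have "real (run_len k) \<le> scale.bound ?N"
      by (rule scale.large_le_bound[OF large_run_len])
    moreover have "\<not> alternates (\<lambda>i. Z i \<omega>) m (run_len k)" if "1 \<le> m" "m + run_len k \<le> ?N + 1" for m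
      using k k0 that by (intro no_alternation_on_block) auto
    ultimately show "\<exists>N\<ge>n. N \<in> {N. 1 \<le> N \<and> (\<exists>L. real L \<le> scale.bound N \<and>
      (\<forall>m. 1 \<le> m \<longrightarrow> m + L \<le> N + 1 \<longrightarrow> \<not> alternates (\<lambda>i. Z i \<omega>) m L))}"
      by blast
  qed
qed

end

theorem theorem2p3:
  fixes M :: "'a measure" and X :: "nat \<Rightarrow> 'a \<Rightarrow> real" and p q lam eps :: real
  assumes "prob_space M"
    and "0 < p" and "p < 1" and "q = 1 - p"
    and "\<And>i. i \<ge> 1 \<Longrightarrow> X i \<in> borel_measurable M"
    and "prob_space.indep_vars M (\<lambda>_. borel) X {1..}"
    and "\<And>i. i \<ge> 1 \<Longrightarrow> measure M {\<omega> \<in> space M. X i \<omega> = 1} = p"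
    and "\<And>i. i \<ge> 1 \<Longrightarrow> measure M {\<omega> \<in> space M. X i \<omega> = 0} = q"
    and "lam = 1 / sqrt (p * q)"
    and "eps > 0"
  shows "AE \<omega> in M. infinite {N :: nat.
           int (M_N X N \<omega>) <
             \<lfloor>log lam (real N) - log lam (log lam (log lam (real N)))
               + log lam (log lam (exp 1)) + 1 + eps\<rfloor>}"
proof -
  interpret prob_space M by (rule assms(1))
  interpret bernoulli_switches M "\<lambda>i \<omega>. X i \<omega> = 1" p eps
  proof unfold_locales
    show "indep_vars (\<lambda>_. count_space UNIV) (\<lambda>i \<omega>. X i \<omega> = 1) {1..}"
      using indep_vars_compose2[OF assms(6), of "\<lambda>_ x. x = 1"] by simp
  qed (use assms in auto)
  have bound: "scale.bound N = log lam (real N) - log lam (log lam (log lam (real N)))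
      + log lam (log lam (exp 1)) + 1 + eps" for N
    using assms(4,9) by (simp add: scale.bound_def)
  have "AE \<omega> in M. \<forall>i\<in>{1..}. X i \<omega> = 0 \<or> X i \<omega> = 1"
    using assms(4,5,7,8) by (subst AE_ball_countable) (auto intro!: AE_two_valued)
  with AE_infinitely_many_short_runs show ?thesis
    unfolding bound[symmetric]
  proof eventually_elim
    case (elim \<omega>)
    show ?case
    proof (rule infinite_super[OF _ elim(1)], safe)
      fix N L assume "1 \<le> N" and L: "real L \<le> scale.bound N"
        "\<forall>m. 1 \<le> m \<longrightarrow> m + L \<le> N + 1 \<longrightarrow> \<not> alternates (\<lambda>i. X i \<omega> = 1) m L"
      have "M_N X N \<omega> < L"
        using \<open>1 \<le> N\<close> elim(2) L(2) by (intro M_N_less_if_no_alternation) auto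
      moreover have "int L \<le> \<lfloor>scale.bound N\<rfloor>"
        using L(1) by (simp add: le_floor_iff)
      ultimately show "int (M_N X N \<omega>) < \<lfloor>scale.bound N\<rfloor>" by simp
    qed
  qed
qed

end
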